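(* Let $N\ge1$, $\Delta w>0$, $\Delta t>0$. For $i=0,\dots,N-1$ let $D_{i+1/2}>0$ and $\tilde{\mathcal C}^n_{i+1/2}\in\mathbb R$ be given (in applications computed from $f^n$), and set $\lambda^n_{i+1/2}=\Delta w\,\tilde{\mathcal C}^n_{i+1/2}/D_{i+1/2}$, $\delta^n_{i+1/2}=\frac{1}{\lambda^n_{i+1/2}}+\frac{1}{1-e^{\lambda^n_{i+1/2}}}$ (with $\delta^n_{i+1/2}=1/2$ if $\lambda^n_{i+1/2}=0$). Consider the semi-implicit scheme $$f_i^{n+1}=f_i^n+\Delta t\,\frac{\hat{\mathcal F}^{n+1}_{i+1/2}-\hat{\mathcal F}^{n+1}_{i-1/2}}{\Delta w},\quad i=0,\dots,N,$$ with $\hat{\mathcal F}^{n+1}_{-1/2}=\hat{\mathcal F}^{n+1}_{N+1/2}=0$ and, for $i=0,\dots,N-1$, $$\hat{\mathcal F}^{n+1}_{i+1/2}=\tilde{\mathcal C}^n_{i+1/2}\big[(1-\delta^n_{i+1/2})f^{n+1}_{i+1}+\delta^n_{i+1/2}f^{n+1}_i\big]+D_{i+1/2}\frac{f^{n+1}_{i+1}-f^{n+1}_i}{\Delta w}.$$ Let $M=\max_i|\tilde{\mathcal C}^n_{i+1/2}|$. If $\Delta t<\frac{\Delta w}{2M}$, then this linear system for $(f_0^{n+1},\dots,f_N^{n+1})$ has a unique solution, and $f_i^n\ge0$ for all $i$ implies $f_i^{n+1}\ge0$ for all $i=0,\dots,N$.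
   Context: Chang–Cooper type (SP-CC) discretization of the 1D Fokker–Planck equation $\partial_t f=\partial_w[(\mathcal B[f]+D')f+D\partial_w f]$ on a uniform grid with no-flux boundary conditions; the drift coefficients and weights are frozen at time level $n$ while $f$ is taken at level $n+1$. *)

theory Defs
  imports Complex_Main
begin

definition cc_delta :: "real \<Rightarrow> real" where
  "cc_delta lam = (if lam = 0 then 1/2 else 1/lam + 1/(1 - exp lam))"

definition cc_lambda :: "real \<Rightarrow> (nat \<Rightarrow> real) \<Rightarrow> (nat \<Rightarrow> real) \<Rightarrow> nat \<Rightarrow> real" where
  "cc_lambda dw C D i = dw * C i / D i"

text \<open>Flux hat-F at interface i+1/2 (index i = 0..N-1) evaluated at grid function g;
  it is zero at i = N (no-flux boundary N+1/2).\<close>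
definition cc_flux :: "nat \<Rightarrow> real \<Rightarrow> (nat \<Rightarrow> real) \<Rightarrow> (nat \<Rightarrow> real) \<Rightarrow> (nat \<Rightarrow> real) \<Rightarrow> nat \<Rightarrow> real" where
  "cc_flux N dw C D g i =
     (if i < N then
        (let del = cc_delta (cc_lambda dw C D i) in
         C i * ((1 - del) * g (i+1) + del * g i) + D i * (g (i+1) - g i) / dw)
      else 0)"

definition cc_scheme :: "nat \<Rightarrow> real \<Rightarrow> real \<Rightarrow> (nat \<Rightarrow> real) \<Rightarrow> (nat \<Rightarrow> real) \<Rightarrow> (nat \<Rightarrow> real) \<Rightarrow> (nat \<Rightarrow> real) \<Rightarrow> bool" where
  "cc_scheme N dw dt C D f g \<longleftrightarrow>
     (\<forall>i\<le>N. g i = f i + dt * (cc_flux N dw C D g i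
                   - (if i = 0 then 0 else cc_flux N dw C D g (i - 1))) / dw)"

end

theory Submission
  imports Defs
begin

text \<open>Write the Chang--Cooper flux as \<open>a\<^sub>i g(i+1) - b\<^sub>i g(i)\<close>. Both coefficients are positive
  whatever the sign of the drift: they are \<open>D/\<Delta>w\<close> times \<open>e\<^sup>\<lambda> B(\<lambda>)\<close> and \<open>B(\<lambda>)\<close> with
  \<open>B(\<lambda>) = \<lambda>/(e\<^sup>\<lambda> - 1) > 0\<close>. Hence the implicit step \<open>g(i) - r (F(i) - F(i-1))\<close> satisfies a
  minimum principle: at a minimum point \<open>m\<close> of \<open>g\<close> its value is at most \<open>g(m)\<close> times its value
  on the constant function \<open>1\<close>, namely \<open>1 - r (C(m) - C(m-1))\<close>, which is positive under the
  time step restriction. This gives positivity and, by linearity, injectivity. Existence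
  follows by shooting: the first \<open>N\<close> rows determine \<open>g\<close> affinely from \<open>g(0)\<close>, and injectivity
  makes the last row solvable for \<open>g(0)\<close>.\<close>

definition two_point_flux :: "nat \<Rightarrow> (nat \<Rightarrow> real) \<Rightarrow> (nat \<Rightarrow> real) \<Rightarrow> (nat \<Rightarrow> real) \<Rightarrow> nat \<Rightarrow> real"
  where "two_point_flux N a b g i = (if i < N then a i * g (Suc i) - b i * g i else 0)"

definition implicit_step ::
    "nat \<Rightarrow> real \<Rightarrow> (nat \<Rightarrow> real) \<Rightarrow> (nat \<Rightarrow> real) \<Rightarrow> (nat \<Rightarrow> real) \<Rightarrow> nat \<Rightarrow> real"
  where "implicit_step N r a b g i =
    g i - r * (two_point_flux N a b g i - (if i = 0 then 0 else two_point_flux N a b g (i - 1)))"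

lemma implicit_step_affine:
  "implicit_step N r a b (\<lambda>k. s * p k + q k) i = s * implicit_step N r a b p i + implicit_step N r a b q i"
  unfolding implicit_step_def two_point_flux_def by (simp add: algebra_simps)

lemma implicit_step_diff:
  "implicit_step N r a b (\<lambda>k. p k - q k) i = implicit_step N r a b p i - implicit_step N r a b q i"
  unfolding implicit_step_def two_point_flux_def by (simp add: algebra_simps)

lemma implicit_step_uminus:
  "implicit_step N r a b (\<lambda>k. - g k) i = - implicit_step N r a b g i"
  unfolding implicit_step_def two_point_flux_def by (simp add: algebra_simps)

lemma implicit_step_at_minimum:
  assumes ab: "\<And>i. i < N \<Longrightarrow> 0 \<le> a i \<and> 0 \<le> b i" and "0 \<le> r"
    and "m \<le> N" and min: "\<And>i. i \<le> N \<Longrightarrow> g m \<le> g i"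
  shows "implicit_step N r a b g m \<le> g m * implicit_step N r a b (\<lambda>_. 1) m"
proof -
  let ?F = "two_point_flux N a b"
  have out: "g m * ?F (\<lambda>_. 1) m \<le> ?F g m"
  proof (cases "m < N")
    case True
    then have "a m * g m \<le> a m * g (Suc m)" using ab min by (intro mult_left_mono) auto
    then show ?thesis using True by (simp add: two_point_flux_def algebra_simps)
  qed (simp add: two_point_flux_def)
  have "?F g (m - 1) \<le> g m * ?F (\<lambda>_. 1) (m - 1)" if "0 < m"
  proof -
    have "b (m - 1) * g m \<le> b (m - 1) * g (m - 1)"
      using ab min that \<open>m \<le> N\<close> by (intro mult_left_mono) auto
    moreover have "m - 1 < N" using that \<open>m \<le> N\<close> by simp
    ultimately show ?thesis using that by (simp add: two_point_flux_def algebra_simps)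
  qed
  then have "?F g m - (if m = 0 then 0 else ?F g (m - 1))
      \<ge> g m * ?F (\<lambda>_. 1) m - (if m = 0 then 0 else g m * ?F (\<lambda>_. 1) (m - 1))"
    using out by auto
  then have "implicit_step N r a b g m
      \<le> g m - r * (g m * ?F (\<lambda>_. 1) m - (if m = 0 then 0 else g m * ?F (\<lambda>_. 1) (m - 1)))"
    unfolding implicit_step_def using \<open>0 \<le> r\<close> by (intro diff_left_mono mult_left_mono)
  also have "\<dots> = g m * implicit_step N r a b (\<lambda>_. 1) m"
    by (cases "m = 0") (simp_all add: implicit_step_def algebra_simps)
  finally show ?thesis .
qed

lemma implicit_step_nonneg_imp_nonneg:
  assumes ab: "\<And>i. i < N \<Longrightarrow> 0 \<le> a i \<and> 0 \<le> b i" and "0 \<le> r"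
    and diag: "\<And>i. i \<le> N \<Longrightarrow> 0 < implicit_step N r a b (\<lambda>_. 1) i"
    and nonneg: "\<And>i. i \<le> N \<Longrightarrow> 0 \<le> implicit_step N r a b g i"
    and "i \<le> N"
  shows "0 \<le> g i"
proof -
  obtain m where "m \<le> N" and min: "\<And>i. i \<le> N \<Longrightarrow> g m \<le> g i"
    using ex_is_arg_min_if_finite[of "{..N}" g] by (auto simp: is_arg_min_linorder)
  have "0 \<le> g m"
  proof (rule ccontr)
    assume "\<not> 0 \<le> g m"
    then have "g m * implicit_step N r a b (\<lambda>_. 1) m < 0"
      using diag[OF \<open>m \<le> N\<close>] by (simp add: mult_neg_pos)
    then show False
      using implicit_step_at_minimum[of N a b r m g] ab \<open>0 \<le> r\<close> \<open>m \<le> N\<close> min nonneg[OF \<open>m \<le> N\<close>]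
      by fastforce
  qed
  then show ?thesis using min[OF \<open>i \<le> N\<close>] by simp
qed

lemma implicit_step_eq_zero_imp_zero:
  assumes ab: "\<And>i. i < N \<Longrightarrow> 0 \<le> a i \<and> 0 \<le> b i" and "0 \<le> r"
    and diag: "\<And>i. i \<le> N \<Longrightarrow> 0 < implicit_step N r a b (\<lambda>_. 1) i"
    and zero: "\<And>i. i \<le> N \<Longrightarrow> implicit_step N r a b g i = 0"
    and "i \<le> N"
  shows "g i = 0"
proof -
  have "0 \<le> g i"
    using implicit_step_nonneg_imp_nonneg[OF ab \<open>0 \<le> r\<close> diag _ \<open>i \<le> N\<close>] zero by simp
  moreover have "0 \<le> - g i"
    using implicit_step_nonneg_imp_nonneg[OF ab \<open>0 \<le> r\<close> diag _ \<open>i \<le> N\<close>, of "\<lambda>k. - g k"]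
    by (simp add: implicit_step_uminus zero)
  ultimately show ?thesis by simp
qed

lemma implicit_step_unique:
  assumes ab: "\<And>i. i < N \<Longrightarrow> 0 \<le> a i \<and> 0 \<le> b i" and "0 \<le> r"
    and diag: "\<And>i. i \<le> N \<Longrightarrow> 0 < implicit_step N r a b (\<lambda>_. 1) i"
    and "\<And>i. i \<le> N \<Longrightarrow> implicit_step N r a b g i = f i"
    and "\<And>i. i \<le> N \<Longrightarrow> implicit_step N r a b h i = f i"
    and "i \<le> N"
  shows "h i = g i"
  using implicit_step_eq_zero_imp_zero[OF ab \<open>0 \<le> r\<close> diag, of "\<lambda>k. h k - g k"] assms(4-6)
  by (simp add: implicit_step_diff)

text \<open>Row \<open>k\<close> of the system, solved for \<open>g (k + 1)\<close>.\<close>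
fun shoot :: "real \<Rightarrow> (nat \<Rightarrow> real) \<Rightarrow> (nat \<Rightarrow> real) \<Rightarrow> (nat \<Rightarrow> real) \<Rightarrow> real \<Rightarrow> nat \<Rightarrow> real" where
  "shoot r a b f s 0 = s"
| "shoot r a b f s (Suc 0) = (s + r * b 0 * s - f 0) / (r * a 0)"
| "shoot r a b f s (Suc (Suc k)) =
     (shoot r a b f s (Suc k) * (1 + r * b (Suc k) + r * a k) - r * b k * shoot r a b f s k
       - f (Suc k)) / (r * a (Suc k))"

lemma implicit_step_shoot:
  assumes "k < N" "r \<noteq> 0" "a k \<noteq> 0"
  shows "implicit_step N r a b (shoot r a b f s) k = f k"
  using assms by (cases k) (simp_all add: implicit_step_def two_point_flux_def field_simps)

lemma implicit_step_solvable:
  assumes ab: "\<And>i. i < N \<Longrightarrow> 0 < a i \<and> 0 \<le> b i" and "0 < r"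
    and diag: "\<And>i. i \<le> N \<Longrightarrow> 0 < implicit_step N r a b (\<lambda>_. 1) i"
  shows "\<exists>g. \<forall>i\<le>N. implicit_step N r a b g i = f i"
proof -
  have ab_nonneg: "\<And>i. i < N \<Longrightarrow> 0 \<le> a i \<and> 0 \<le> b i" using ab by fastforce
  define p where "p = shoot r a b (\<lambda>_. 0) 1"
  define q where "q = shoot r a b f 0"
  have p_rows: "implicit_step N r a b p k = 0" and q_rows: "implicit_step N r a b q k = f k"
    if "k < N" for k
    unfolding p_def q_def using implicit_step_shoot that ab \<open>0 < r\<close> by fastforce+
  have "implicit_step N r a b p N \<noteq> 0"
  proof
    assume "implicit_step N r a b p N = 0"
    then have "implicit_step N r a b p i = 0" if "i \<le> N" for i
      using p_rows that by (cases "i = N") auto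
    then have "p 0 = 0"
      using implicit_step_eq_zero_imp_zero[OF ab_nonneg less_imp_le[OF \<open>0 < r\<close>] diag] by blast
    then show False by (simp add: p_def)
  qed
  define s where "s = (f N - implicit_step N r a b q N) / implicit_step N r a b p N"
  have "implicit_step N r a b (\<lambda>k. s * p k + q k) i = f i" if "i \<le> N" for i
  proof (cases "i = N")
    case True
    then show ?thesis
      using \<open>implicit_step N r a b p N \<noteq> 0\<close> unfolding implicit_step_affine by (simp add: s_def)
  next
    case False
    then show ?thesis using that p_rows q_rows by (simp add: implicit_step_affine)
  qed
  then show ?thesis by blast
qed

lemma implicit_step_const_pos:
  assumes "\<And>i. i < N \<Longrightarrow> 2 * \<bar>r * (a i - b i)\<bar> < 1" and "i \<le> N"
  shows "0 < implicit_step N r a b (\<lambda>_. 1) i"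
proof -
  have "2 * \<bar>r * two_point_flux N a b (\<lambda>_. 1) j\<bar> < 1" if "j \<le> N" for j
    using assms(1)[of j] that by (simp add: two_point_flux_def)
  from this[of i] this[of "i - 1"] \<open>i \<le> N\<close> show ?thesis
    unfolding implicit_step_def right_diff_distrib by (auto simp: le_diff_conv split: abs_split)
qed

definition cc_coeff_next :: "real \<Rightarrow> (nat \<Rightarrow> real) \<Rightarrow> (nat \<Rightarrow> real) \<Rightarrow> nat \<Rightarrow> real"
  where "cc_coeff_next dw C D i = C i * (1 - cc_delta (cc_lambda dw C D i)) + D i / dw"

definition cc_coeff_self :: "real \<Rightarrow> (nat \<Rightarrow> real) \<Rightarrow> (nat \<Rightarrow> real) \<Rightarrow> nat \<Rightarrow> real"
  where "cc_coeff_self dw C D i = D i / dw - C i * cc_delta (cc_lambda dw C D i)"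

lemma cc_coeff_next_minus_self: "cc_coeff_next dw C D i - cc_coeff_self dw C D i = C i"
  unfolding cc_coeff_next_def cc_coeff_self_def by (simp add: algebra_simps)

lemma cc_flux_eq_two_point_flux:
  "cc_flux N dw C D g i = two_point_flux N (cc_coeff_next dw C D) (cc_coeff_self dw C D) g i"
  unfolding cc_flux_def two_point_flux_def cc_coeff_next_def cc_coeff_self_def Let_def
  by (simp add: diff_divide_distrib algebra_simps)

lemma cc_delta_weights_pos:
  fixes l :: real
  shows "0 < 1 - l * cc_delta l" and "0 < 1 + l * (1 - cc_delta l)"
proof -
  have "0 < 1 - l * cc_delta l \<and> 0 < 1 + l * (1 - cc_delta l)"
  proof (cases "l = 0")
    case False
    have "0 < l / (exp l - 1)"
      using False by (cases "0 < l") (auto intro: divide_pos_pos divide_neg_neg)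
    moreover have "1 - l * cc_delta l = l / (exp l - 1)"
      and "1 + l * (1 - cc_delta l) = exp l * (l / (exp l - 1))"
      using False by (simp_all add: cc_delta_def field_simps)
    ultimately show ?thesis using mult_pos_pos[OF exp_gt_zero, of "l / (exp l - 1)" l] by linarith
  qed (simp add: cc_delta_def)
  then show "0 < 1 - l * cc_delta l" and "0 < 1 + l * (1 - cc_delta l)" by simp_all
qed

lemma cc_coeffs_pos:
  assumes "0 < D i" "0 < dw"
  shows "0 < cc_coeff_next dw C D i" and "0 < cc_coeff_self dw C D i"
proof -
  define l where "l = cc_lambda dw C D i"
  have "C i = l * (D i / dw)" using assms by (simp add: l_def cc_lambda_def)
  then have "cc_coeff_next dw C D i = D i / dw * (1 + l * (1 - cc_delta l))"
    and "cc_coeff_self dw C D i = D i / dw * (1 - l * cc_delta l)"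
    using assms by (simp_all add: cc_coeff_next_def cc_coeff_self_def l_def field_simps)
  then show "0 < cc_coeff_next dw C D i" and "0 < cc_coeff_self dw C D i"
    using assms cc_delta_weights_pos[of l] by simp_all
qed

lemma cc_scheme_iff_implicit_step:
  assumes "0 < dw"
  shows "cc_scheme N dw dt C D f g \<longleftrightarrow>
    (\<forall>i\<le>N. implicit_step N (dt / dw) (cc_coeff_next dw C D) (cc_coeff_self dw C D) g i = f i)"
  using assms
  by (auto simp: cc_scheme_def implicit_step_def cc_flux_eq_two_point_flux field_simps)

lemma cc_implicit_step_const_pos:
  assumes "0 < dw" "0 < dt" and step: "2 * dt * Max {\<bar>C i\<bar> | i. i < N} < dw" and "i \<le> N"
  shows "0 < implicit_step N (dt / dw) (cc_coeff_next dw C D) (cc_coeff_self dw C D) (\<lambda>_. 1) i"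
proof (rule implicit_step_const_pos[OF _ \<open>i \<le> N\<close>])
  fix j assume "j < N"
  then have "\<bar>C j\<bar> \<le> Max {\<bar>C i\<bar> | i. i < N}"
    by (intro Max_ge) (auto simp: setcompr_eq_image)
  then have "2 * dt * \<bar>C j\<bar> \<le> 2 * dt * Max {\<bar>C i\<bar> | i. i < N}"
    using \<open>0 < dt\<close> by (intro mult_left_mono) auto
  then have "2 * dt * \<bar>C j\<bar> < dw" using step by linarith
  then show "2 * \<bar>dt / dw * (cc_coeff_next dw C D j - cc_coeff_self dw C D j)\<bar> < 1"
    using assms(1,2) by (simp add: cc_coeff_next_minus_self abs_mult field_simps)
qed

theorem mainTheorem4:
  fixes N :: nat and dw dt :: real and C D f :: "nat \<Rightarrow> real"
  assumes "N \<ge> 1" and "dw > 0" and "dt > 0"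
    and "\<And>i. i < N \<Longrightarrow> D i > 0"
    and "2 * dt * Max {\<bar>C i\<bar> | i. i < N} < dw"
  shows "(\<exists>g. cc_scheme N dw dt C D f g \<and>
            (\<forall>h. cc_scheme N dw dt C D f h \<longrightarrow> (\<forall>i\<le>N. h i = g i)))
       \<and> ((\<forall>i\<le>N. f i \<ge> 0) \<longrightarrow>
            (\<forall>g. cc_scheme N dw dt C D f g \<longrightarrow> (\<forall>i\<le>N. g i \<ge> 0)))"
proof -
  define a where "a = cc_coeff_next dw C D"
  define b where "b = cc_coeff_self dw C D"
  have r: "0 \<le> dt / dw" "0 < dt / dw" using assms(2,3) by simp_all
  have ab: "0 < a i" "0 < b i" if "i < N" for i
    using cc_coeffs_pos[of D i dw C] assms(2,4) that by (simp_all add: a_def b_def)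
  then have ab_nonneg: "0 \<le> a i \<and> 0 \<le> b i" and ab_solvable: "0 < a i \<and> 0 \<le> b i"
    if "i < N" for i using that by (simp_all add: less_imp_le)
  have diag: "0 < implicit_step N (dt / dw) a b (\<lambda>_. 1) i" if "i \<le> N" for i
    unfolding a_def b_def using cc_implicit_step_const_pos assms(2,3,5) that .
  have scheme: "cc_scheme N dw dt C D f h \<longleftrightarrow> (\<forall>i\<le>N. implicit_step N (dt / dw) a b h i = f i)"
    for h unfolding a_def b_def by (rule cc_scheme_iff_implicit_step[OF assms(2)])
  obtain g where g: "\<And>i. i \<le> N \<Longrightarrow> implicit_step N (dt / dw) a b g i = f i"
    using implicit_step_solvable[OF ab_solvable r(2) diag] by blast
  have unique: "h i = g i" if "\<forall>i\<le>N. implicit_step N (dt / dw) a b h i = f i" "i \<le> N" for h i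
    using implicit_step_unique[OF ab_nonneg r(1) diag, of g f h i] g that by simp
  have nonneg: "0 \<le> h i"
    if "\<forall>i\<le>N. 0 \<le> f i" "\<forall>i\<le>N. implicit_step N (dt / dw) a b h i = f i" "i \<le> N" for h i
    using implicit_step_nonneg_imp_nonneg[OF ab_nonneg r(1) diag, of h i] that by simp
  show ?thesis
    unfolding scheme using g unique nonneg by (intro conjI exI[of _ g]) auto
qed

end
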